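(* Let $N\ge3$ and $p>0$. For each $1\le j\le N-1$ let $W^{(j)}$ be the unique solution in $L^2_c$ of $L_-W^{(j)}=U^{(j)}$. Then $$\langle U^{(j)},W^{(k)}\rangle_{L^2(\Gamma)}=0\ \ (j\ne k),\qquad \langle U^{(j)},W^{(j)}\rangle_{L^2(\Gamma)}>0 .$$ Moreover, the vectors $U^{(1)},\dots,U^{(N-1)}$ are pairwise orthogonal in $L^2(\Gamma)$, and so are the vectors $W^{(1)},\dots,W^{(N-1)}$.
   Context: Let $\Gamma$ be the star graph of $N$ half-lines joined at a single vertex, each edge parametrized by $x\in[0,\infty)$ with vertex at $x=0$. Functions are real-valued; $L^2(\Gamma)=\oplus_{j=1}^NL^2(\mathbb{R}^+)$ with $\langle F,G\rangle_{L^2(\Gamma)}=\sum_j\int_0^\infty f_jg_j\,dx$, and $H^2_\Gamma=\{\Psi\in\oplus_jH^2(\mathbb{R}^+):\psi_1(0)=\dots=\psi_N(0),\ \sum_j\psi_j'(0)=0\}$. Let $\phi(x)=\operatorname{sech}^{1/p}(px)$, $\Phi=\phi\,(1,\dots,1)^T$, $L^2_c=\{V\in L^2(\Gamma):\langle V,\Phi\rangle_{L^2(\Gamma)}=0\}$. $L_-=-\Delta+1-(p+1)\Phi^{2p}$ (componentwise) is self-adjoint on $L^2(\Gamma)$ with domain $H^2_\Gamma$, and its kernel is spanned by $\Phi$. For $k=1,\dots,N-1$ let $e_k\in\mathbb{R}^N$ have first $k$ entries $1$, $(k+1)$-th entry $-k$, other entries $0$, and $U^{(k)}=\phi'(x)e_k$;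 note $U^{(k)}\in L^2_c$. *)

theory Defs
  imports "HOL-Analysis.Analysis"
begin

text \<open>Functions on the star graph with N edges are represented as
  F :: nat \<Rightarrow> real \<Rightarrow> real, where F j (j < N) is the j-th component on [0,\<infinity>).
  Edges are indexed 0,...,N-1.\<close>

definition phi :: "real \<Rightarrow> real \<Rightarrow> real" where
  "phi p x = (1 / cosh (p * x)) powr (1 / p)"

definition Phi :: "real \<Rightarrow> nat \<Rightarrow> real \<Rightarrow> real" where
  "Phi p j x = phi p x"

definition evec :: "nat \<Rightarrow> nat \<Rightarrow> real" where
  "evec k i = (if i < k then 1 else if i = k then - real k else 0)"

definition U :: "real \<Rightarrow> nat \<Rightarrow> nat \<Rightarrow> real \<Rightarrow> real" where
  "U p k j x = deriv (phi p) x * evec k j"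

definition L2_half :: "(real \<Rightarrow> real) \<Rightarrow> bool" where
  "L2_half f \<longleftrightarrow> set_borel_measurable lborel {0..} f \<and>
      set_integrable lborel {0..} (\<lambda>x. (f x)^2)"

definition in_L2_Gamma :: "nat \<Rightarrow> (nat \<Rightarrow> real \<Rightarrow> real) \<Rightarrow> bool" where
  "in_L2_Gamma N F \<longleftrightarrow> (\<forall>j<N. L2_half (F j))"

definition ip_Gamma :: "nat \<Rightarrow> (nat \<Rightarrow> real \<Rightarrow> real) \<Rightarrow> (nat \<Rightarrow> real \<Rightarrow> real) \<Rightarrow> real" where
  "ip_Gamma N F G = (\<Sum>j<N. LINT x:{0..}|lborel. F j x * G j x)"

text \<open>H^2 on the half-line, with first derivative d1 and (weak) second derivative d2:
  f is C^1 on [0,\<infinity>) with derivative d1, d1 is absolutely continuous with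
  derivative d2 a.e., and f, d1, d2 are square integrable.\<close>
definition H2_half :: "(real \<Rightarrow> real) \<Rightarrow> (real \<Rightarrow> real) \<Rightarrow> (real \<Rightarrow> real) \<Rightarrow> bool" where
  "H2_half f d1 d2 \<longleftrightarrow> L2_half f \<and> L2_half d1 \<and> L2_half d2 \<and>
     (\<forall>x\<ge>0. (f has_real_derivative d1 x) (at x within {0..})) \<and>
     (\<forall>x\<ge>0. set_integrable lborel {0..x} d2 \<and> d1 x = d1 0 + (LBINT t=0..x. d2 t))"

definition Lminus_solves :: "real \<Rightarrow> nat \<Rightarrow> (nat \<Rightarrow> real \<Rightarrow> real) \<Rightarrow> (nat \<Rightarrow> real \<Rightarrow> real) \<Rightarrow> bool" where
  "Lminus_solves p N W F \<longleftrightarrow>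
     (\<exists>D1 D2 :: nat \<Rightarrow> real \<Rightarrow> real.
        (\<forall>j<N. H2_half (W j) (D1 j) (D2 j)) \<and>
        (\<forall>j<N. W j 0 = W 0 0) \<and>
        (\<Sum>j<N. D1 j 0) = 0 \<and>
        (\<forall>j<N. AE x in lborel. x \<ge> 0 \<longrightarrow>
            - D2 j x + W j x - (p + 1) * (phi p x) powr (2 * p) * W j x = F j x))"

end

theory Submission
  imports Defs
begin

text \<open>On one half-line, \<open>\<phi> = sech\<^sup>1\<^sup>/\<^sup>p(p x)\<close> satisfies \<open>L_- \<phi> = 0\<close> and \<open>\<psi> = -x \<phi> / 2\<close> satisfies
  \<open>L_- \<psi> = \<phi>'\<close>. If \<open>W \<in> H\<^sup>2\<^sub>\<Gamma>\<close> solves \<open>L_- W = U\<^sup>(\<^sup>k\<^sup>) = \<phi>' e\<^sub>k\<close>, then on every edge \<open>d = W\<^sub>i - (e\<^sub>k)\<^sub>i \<psi>\<close>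
  solves \<open>L_- d = 0\<close>; its Wronskian with \<open>\<phi>\<close> is constant and square integrable, hence zero, so \<open>d\<close> is
  a multiple of \<open>\<phi>\<close>. Continuity at the vertex makes the multiple the same on all edges, and
  orthogonality to \<open>\<Phi>\<close> kills it because the entries of \<open>e\<^sub>k\<close> sum to zero. Thus \<open>W\<^sup>(\<^sup>k\<^sup>) = \<psi> e\<^sub>k\<close>, every
  inner product in question is \<open>\<langle>e\<^sub>j, e\<^sub>k\<rangle>\<close> times an integral over the half-line, the \<open>e\<^sub>k\<close> are
  pairwise orthogonal, and \<open>\<integral> \<phi>' \<psi> > 0\<close> because \<open>\<phi>'\<close> and \<open>\<psi>\<close> are both negative on \<open>(0, \<infinity>)\<close>.\<close>

section \<open>Square integrable functions on the half-line\<close>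

lemma set_integrable_Ici_dominated:
  fixes g h :: "real \<Rightarrow> real"
  assumes "continuous_on {0..} g" "set_integrable lborel {0..} h" "\<And>x. x \<ge> 0 \<Longrightarrow> \<bar>g x\<bar> \<le> h x"
  shows "set_integrable lborel {0..} g"
proof (rule set_integrable_bound[OF assms(2)])
  show "set_borel_measurable lborel {0..} g"
    unfolding set_borel_measurable_def
    using borel_measurable_continuous_on_indicator[OF _ assms(1)] by simp
  show "AE x in lborel. x \<in> {0..} \<longrightarrow> norm (g x) \<le> norm (h x)"
    using assms(3) by (auto intro!: AE_I2 intro: order_trans[OF _ abs_ge_self])
qed

lemma set_integrable_exp_minus_Ici: "set_integrable lborel {0::real..} (\<lambda>x. exp (- x))"
proof -
  have "(\<lambda>x::real. exp (- 1 * x)) absolutely_integrable_on {0..}"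
    by (intro nonnegative_absolutely_integrable_1 integrable_on_exp_minus_to_infinity) auto
  then show ?thesis
    unfolding set_integrable_def
    by (subst (asm) integrable_completion)
       (auto intro!: borel_measurable_continuous_on_indicator continuous_intros)
qed

lemma set_integrable_Ici_const_eq_0:
  assumes "set_integrable lborel {0::real..} (\<lambda>_. c :: real)"
  shows "c = 0"
proof (rule ccontr)
  assume "c \<noteq> 0"
  with assms have "integrable lborel (indicator {0::real..} :: real \<Rightarrow> real)"
    by (simp add: set_integrable_def mult.commute)
  then have "emeasure lborel {0::real..} < \<infinity>"
    by (simp add: integrable_indicator_iff)
  then obtain r where r: "r \<ge> 0" "emeasure lborel {0::real..} = ennreal r"
    using less_top_ennreal by (metis infinity_ennreal_def)
  have "emeasure lborel {0..r + 1} \<le> emeasure lborel {0::real..}"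
    by (rule emeasure_mono) auto
  then show False
    using r by simp
qed

lemma set_integral_Ici_pos:
  fixes f :: "real \<Rightarrow> real"
  assumes int: "set_integrable lborel {0..} f"
    and nonneg: "\<And>x. x \<ge> 0 \<Longrightarrow> f x \<ge> 0" and pos: "\<And>x. x > 0 \<Longrightarrow> f x > 0"
  shows "(LINT x:{0..}|lborel. f x) > 0"
proof -
  let ?h = "\<lambda>x. indicator {0..} x *\<^sub>R f x"
  have h_nonneg: "AE x in lborel. 0 \<le> ?h x"
    using nonneg by (intro AE_I2) (simp add: indicator_def)
  have "integral\<^sup>L lborel ?h \<noteq> 0"
  proof
    assume "integral\<^sup>L lborel ?h = 0"
    then have "AE x in lborel. ?h x = 0"
      using integral_nonneg_eq_0_iff_AE[OF int[unfolded set_integrable_def] h_nonneg] by simp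
    then have "AE x in lborel. x \<notin> {0<..<1::real}"
      by eventually_elim (use pos in \<open>fastforce split: split_indicator\<close>)
    then have "emeasure lborel {0<..<1::real} = 0"
      by (subst (asm) AE_iff_measurable[of "{0<..<1}"]) auto
    then show False
      by simp
  qed
  moreover have "integral\<^sup>L lborel ?h \<ge> 0"
    by (rule integral_nonneg_AE[OF h_nonneg])
  ultimately show ?thesis
    unfolding set_lebesgue_integral_def by simp
qed

lemma set_integrable_square_bounded_combination:
  fixes f g a b :: "real \<Rightarrow> real"
  assumes cont: "continuous_on {0..} f" "continuous_on {0..} g" "continuous_on {0..} a" "continuous_on {0..} b"
    and sq: "set_integrable lborel {0..} (\<lambda>x. (f x)\<^sup>2)" "set_integrable lborel {0..} (\<lambda>x. (g x)\<^sup>2)"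
    and bound: "\<And>x. x \<ge> 0 \<Longrightarrow> \<bar>a x\<bar> \<le> A" "\<And>x. x \<ge> 0 \<Longrightarrow> \<bar>b x\<bar> \<le> B"
  shows "set_integrable lborel {0..} (\<lambda>x. (f x * a x - g x * b x)\<^sup>2)"
proof (rule set_integrable_Ici_dominated)
  show "set_integrable lborel {0..} (\<lambda>x. 2 * A\<^sup>2 * (f x)\<^sup>2 + 2 * B\<^sup>2 * (g x)\<^sup>2)"
    using sq by (intro set_integral_add(1) set_integrable_mult_right)
  show "continuous_on {0..} (\<lambda>x. (f x * a x - g x * b x)\<^sup>2)"
    using cont by (intro continuous_intros)
  fix x :: real assume x: "x \<ge> 0"
  have "(a x)\<^sup>2 \<le> A\<^sup>2" "(b x)\<^sup>2 \<le> B\<^sup>2"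
    using power_mono[OF bound(1)[OF x], of 2] power_mono[OF bound(2)[OF x], of 2] by simp_all
  then have "(f x * a x)\<^sup>2 \<le> A\<^sup>2 * (f x)\<^sup>2" "(g x * b x)\<^sup>2 \<le> B\<^sup>2 * (g x)\<^sup>2"
    by (simp_all add: power_mult_distrib mult_right_mono mult.commute)
  moreover have "(f x * a x - g x * b x)\<^sup>2 \<le> 2 * (f x * a x)\<^sup>2 + 2 * (g x * b x)\<^sup>2"
    using zero_le_square[of "f x * a x + g x * b x"] by (simp add: power2_eq_square algebra_simps)
  ultimately show "\<bar>(f x * a x - g x * b x)\<^sup>2\<bar> \<le> 2 * A\<^sup>2 * (f x)\<^sup>2 + 2 * B\<^sup>2 * (g x)\<^sup>2"
    by simp
qed

section \<open>Linear second-order equations on the half-line\<close>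

lemma has_real_derivative_integral_repr:
  fixes d1 d2 g :: "real \<Rightarrow> real"
  assumes repr: "\<forall>x\<ge>0. set_integrable lborel {0..x} d2 \<and> d1 x = d1 0 + (LBINT t=0..x. d2 t)"
    and ae: "AE x in lborel. x \<ge> 0 \<longrightarrow> d2 x = g x"
    and cont: "continuous_on {0..} g" and x: "x \<ge> 0"
  shows "(d1 has_real_derivative g x) (at x within {0..})"
proof -
  have d1_eq: "d1 u = d1 0 + (LBINT t=0..u. g t)" if u: "u \<ge> 0" for u
  proof -
    have "set_integrable lborel {0..u} d2"
      using repr u by blast
    then have m1: "(\<lambda>t. indicator {0..u} t *\<^sub>R d2 t) \<in> borel_measurable lborel"
      unfolding set_integrable_def by (rule borel_measurable_integrable)
    have "set_integrable lborel {0..u} g"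
      by (rule borel_integrable_atLeastAtMost'[OF continuous_on_subset[OF cont]]) auto
    then have m2: "(\<lambda>t. indicator {0..u} t *\<^sub>R g t) \<in> borel_measurable lborel"
      unfolding set_integrable_def by (rule borel_measurable_integrable)
    have "(LINT t:{0..u}|lborel. d2 t) = (LINT t:{0..u}|lborel. g t)"
      unfolding set_lebesgue_integral_def
      by (rule integral_cong_AE[OF m1 m2]) (use ae in \<open>eventually_elim, auto split: split_indicator\<close>)
    then have "(LBINT t=0..u. d2 t) = (LBINT t=0..u. g t)"
      using interval_integral_Icc[OF u, of d2] interval_integral_Icc[OF u, of g]
      by (simp only: zero_ereal_def)
    moreover have "d1 u = d1 0 + (LBINT t=0..u. d2 t)"
      using repr u by blast
    ultimately show ?thesis
      by simp
  qed
  have "((\<lambda>u. LBINT t=ereal 0..ereal u. g t) has_vector_derivative g x) (at x within {0..x + 1})"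
    using x by (intro interval_integral_FTC2 continuous_on_subset[OF cont]) auto
  then have "((\<lambda>u. LBINT t=0..u. g t) has_real_derivative g x) (at x within {0..x + 1})"
    by (simp only: zero_ereal_def has_real_derivative_iff_has_vector_derivative)
  from DERIV_add[OF DERIV_const this]
  have "((\<lambda>u. d1 0 + (LBINT t=0..u. g t)) has_real_derivative g x) (at x within {0..x + 1})"
    by simp
  then have "(d1 has_real_derivative g x) (at x within {0..x + 1})"
    by (rule has_field_derivative_transform_within[OF _ zero_less_one])
       (use x in \<open>auto intro: d1_eq[symmetric]\<close>)
  moreover have "at x within {0..x + 1} = at x within {0..}"
    by (rule at_within_nhd[of _ "{..<x + 1}"]) auto
  ultimately show ?thesis
    by simp
qed

text \<open>The Wronskian of two solutions is constant, so square integrability forces it to vanish.\<close>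
lemma ode_solutions_proportional:
  fixes u u' d d' V :: "real \<Rightarrow> real"
  assumes u: "\<And>x. x \<ge> 0 \<Longrightarrow> (u has_real_derivative u' x) (at x within {0..})"
             "\<And>x. x \<ge> 0 \<Longrightarrow> (u' has_real_derivative V x * u x) (at x within {0..})"
             "\<And>x. x \<ge> 0 \<Longrightarrow> u x > 0"
    and d: "\<And>x. x \<ge> 0 \<Longrightarrow> (d has_real_derivative d' x) (at x within {0..})"
           "\<And>x. x \<ge> 0 \<Longrightarrow> (d' has_real_derivative V x * d x) (at x within {0..})"
    and wronskian_L2: "set_integrable lborel {0..} (\<lambda>x. (d x * u' x - d' x * u x)\<^sup>2)"
    and x: "x \<ge> 0"
  shows "d x * u 0 = d 0 * u x"
proof -
  define w where "w x = d x * u' x - d' x * u x" for x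
  have "(w has_real_derivative 0) (at y within {0..})" if "y \<in> {0..}" for y
  proof -
    have y: "y \<ge> 0"
      using that by simp
    have "(w has_real_derivative d' y * u' y + V y * u y * d y - (V y * d y * u y + u' y * d' y))
        (at y within {0..})"
      unfolding w_def[abs_def]
      by (rule DERIV_diff[OF DERIV_mult[OF d(1) u(2)] DERIV_mult[OF d(2) u(1)]]) (use y in auto)
    then show ?thesis
      by (simp add: algebra_simps)
  qed
  then obtain c where w_const: "\<And>y. y \<ge> 0 \<Longrightarrow> w y = c"
    using has_field_derivative_zero_constant[of "{0..}" w] by auto
  have "set_integrable lborel {0..} (\<lambda>x. (w x)\<^sup>2)"
    using wronskian_L2 by (simp add: w_def)
  then have "set_integrable lborel {0::real..} (\<lambda>_. c\<^sup>2)"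
    using set_integrable_cong[OF refl refl, of "{0..}" "\<lambda>x. (w x)\<^sup>2" "\<lambda>_. c\<^sup>2"] w_const by simp
  then have w_0: "\<And>y. y \<ge> 0 \<Longrightarrow> w y = 0"
    using set_integrable_Ici_const_eq_0 w_const by fastforce
  have "((\<lambda>y. d y / u y) has_real_derivative 0) (at y within {0..})" if y: "y \<in> {0..}" for y
  proof -
    have "((\<lambda>y. d y / u y) has_real_derivative (d' y * u y - d y * u' y) / (u y * u y)) (at y within {0..})"
      using y u(3)[of y] by (intro DERIV_divide d u) auto
    then show ?thesis
      using w_0[of y] y by (simp add: w_def)
  qed
  then obtain q where "\<And>y. y \<ge> 0 \<Longrightarrow> d y / u y = q"
    using has_field_derivative_zero_constant[of "{0..}" "\<lambda>y. d y / u y"] by auto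
  from this[of x] this[of 0] show ?thesis
    using x u(3)[of x] u(3)[of 0] by (simp add: field_simps)
qed

section \<open>The profile \<open>\<phi>\<close> and \<open>\<psi> = -x \<phi> / 2\<close>\<close>

definition dphi :: "real \<Rightarrow> real \<Rightarrow> real" where
  "dphi p x = - tanh (p * x) * phi p x"

definition potential :: "real \<Rightarrow> real \<Rightarrow> real" where
  "potential p x = 1 - (p + 1) * phi p x powr (2 * p)"

lemma phi_eq_exp: "phi p x = exp (- ln (cosh (p * x)) / p)"
  unfolding phi_def powr_def by (simp add: ln_div)

lemma phi_pos: "phi p x > 0"
  by (simp add: phi_eq_exp)

lemma phi_0: "phi p 0 = 1"
  by (simp add: phi_eq_exp)

lemma phi_le_1: "p > 0 \<Longrightarrow> phi p x \<le> 1"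
  using cosh_real_ge_1[of "p * x"] by (simp add: phi_eq_exp divide_nonpos_pos)

lemma phi_powr_2p:
  assumes "p > 0"
  shows "phi p x powr (2 * p) = 1 - (tanh (p * x))\<^sup>2"
proof -
  have "phi p x powr (2 * p) = exp (- (2 * ln (cosh (p * x))))"
    using assms by (simp add: powr_def phi_pos phi_eq_exp)
  also have "\<dots> = 1 / exp (ln ((cosh (p * x))\<^sup>2))"
    by (simp add: exp_minus inverse_eq_divide ln_realpow)
  also have "\<dots> = 1 / (cosh (p * x))\<^sup>2"
    by simp
  also have "\<dots> = ((cosh (p * x))\<^sup>2 - (sinh (p * x))\<^sup>2) / (cosh (p * x))\<^sup>2"
    by (simp only: hyperbolic_pythagoras)
  also have "\<dots> = 1 - (tanh (p * x))\<^sup>2"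
    by (simp add: tanh_def power_divide diff_divide_distrib)
  finally show ?thesis .
qed

lemma has_real_derivative_phi:
  "p > 0 \<Longrightarrow> (phi p has_real_derivative dphi p x) (at x within S)"
  unfolding phi_eq_exp[abs_def]
  by (rule derivative_eq_intros refl | simp)+ (simp add: dphi_def phi_eq_exp tanh_def)

lemma deriv_phi: "p > 0 \<Longrightarrow> deriv (phi p) = dphi p"
  using has_real_derivative_phi[of p _ UNIV] by (simp add: DERIV_imp_deriv fun_eq_iff)

lemma has_real_derivative_dphi:
  assumes p: "p > 0"
  shows "(dphi p has_real_derivative potential p x * phi p x) (at x within S)"
  unfolding dphi_def[abs_def]
  by (rule derivative_eq_intros refl has_real_derivative_phi[OF p] | simp)+
     (simp only: potential_def phi_powr_2p[OF p], simp add: dphi_def algebra_simps power2_eq_square)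

lemma continuous_on_phi: "p > 0 \<Longrightarrow> continuous_on S (phi p)"
  by (rule DERIV_continuous_on[OF has_real_derivative_phi])

lemma continuous_on_dphi: "p > 0 \<Longrightarrow> continuous_on S (dphi p)"
  by (rule DERIV_continuous_on[OF has_real_derivative_dphi])

lemma continuous_on_potential:
  assumes "p > 0"
  shows "continuous_on S (potential p)"
proof -
  have "potential p = (\<lambda>x. 1 - (p + 1) * (1 - (tanh (p * x))\<^sup>2))"
    using phi_powr_2p[OF assms] by (simp add: potential_def fun_eq_iff)
  then show ?thesis
    by (auto intro!: continuous_intros)
qed

lemma abs_dphi_le_phi: "\<bar>dphi p x\<bar> \<le> phi p x"
  using tanh_real_bounds[of "p * x"] phi_pos[of p x]
  by (simp add: dphi_def abs_mult mult_le_cancel_right1 abs_le_iff)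

lemma phi_le_exp:
  assumes p: "p > 0" and x: "x \<ge> 0"
  shows "phi p x \<le> exp (ln 2 / p) * exp (- x)"
proof -
  have "exp (p * x) / 2 \<le> cosh (p * x)"
    unfolding cosh_def by (simp add: divide_right_mono)
  then have "ln (exp (p * x) / 2) \<le> ln (cosh (p * x))"
    by (subst ln_le_cancel_iff) auto
  then have "p * x - ln 2 \<le> ln (cosh (p * x))"
    by (simp add: ln_div)
  then have "- ln (cosh (p * x)) / p \<le> ln 2 / p + - x"
    using p by (simp add: field_simps)
  then show ?thesis
    by (simp add: phi_eq_exp exp_add[symmetric])
qed

definition psi :: "real \<Rightarrow> real \<Rightarrow> real" where
  "psi p x = - x * phi p x / 2"

definition dpsi :: "real \<Rightarrow> real \<Rightarrow> real" where
  "dpsi p x = - phi p x / 2 - x * dphi p x / 2"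

lemma psi_0: "psi p 0 = 0"
  by (simp add: psi_def)

lemma has_real_derivative_psi: "p > 0 \<Longrightarrow> (psi p has_real_derivative dpsi p x) (at x within S)"
  unfolding psi_def[abs_def]
  by (rule derivative_eq_intros refl has_real_derivative_phi | simp)+ (simp add: dpsi_def field_simps)

text \<open>Since \<open>L_- \<phi> = 0\<close>, the product rule gives \<open>L_- (x \<phi>) = -2 \<phi>'\<close>, so \<open>L_- \<psi> = \<phi>'\<close>.\<close>
lemma has_real_derivative_dpsi:
  "p > 0 \<Longrightarrow> (dpsi p has_real_derivative potential p x * psi p x - dphi p x) (at x within S)"
  unfolding dpsi_def[abs_def]
  by (rule derivative_eq_intros refl has_real_derivative_phi has_real_derivative_dphi | simp)+
     (simp add: psi_def field_simps)

lemma continuous_on_psi: "p > 0 \<Longrightarrow> continuous_on S (psi p)"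
  by (rule DERIV_continuous_on[OF has_real_derivative_psi])

lemma continuous_on_dpsi: "p > 0 \<Longrightarrow> continuous_on S (dpsi p)"
  by (rule DERIV_continuous_on[OF has_real_derivative_dpsi])

lemma dphi_times_psi_pos: "p > 0 \<Longrightarrow> x > 0 \<Longrightarrow> dphi p x * psi p x > 0"
  using phi_pos[of p x] by (simp add: dphi_def psi_def mult_pos_pos)

lemma set_integrable_weighted_phi_sq:
  assumes p: "p > 0"
  shows "set_integrable lborel {0..} (\<lambda>x. (1 + x)\<^sup>2 * (phi p x)\<^sup>2)"
proof (rule set_integrable_Ici_dominated)
  let ?K = "exp (ln 2 / p)"
  show "set_integrable lborel {0..} (\<lambda>x. 4 * ?K\<^sup>2 * exp (- x))"
    using set_integrable_exp_minus_Ici by (rule set_integrable_mult_right)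
  fix x :: real assume x: "x \<ge> 0"
  have "1 + x / 2 \<le> exp (x / 2)"
    by (rule exp_ge_add_one_self)
  then have "(1 + x / 2)\<^sup>2 \<le> (exp (x / 2))\<^sup>2"
    using x by (intro power_mono) auto
  then have poly: "(1 + x)\<^sup>2 \<le> 4 * exp x"
    using x by (simp add: power2_eq_square exp_add[symmetric] field_simps)
  have "(phi p x)\<^sup>2 \<le> (?K * exp (- x))\<^sup>2"
    using phi_le_exp[OF p x] phi_pos[of p x] by (intro power_mono) auto
  then have "(1 + x)\<^sup>2 * (phi p x)\<^sup>2 \<le> (4 * exp x) * (?K\<^sup>2 * exp (- x) * exp (- x))"
    using poly by (intro mult_mono) (auto simp: power2_eq_square mult_ac)
  then show "\<bar>(1 + x)\<^sup>2 * (phi p x)\<^sup>2\<bar> \<le> 4 * ?K\<^sup>2 * exp (- x)"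
    by (simp add: exp_minus field_simps)
qed (auto intro!: continuous_intros continuous_on_phi p)

lemma set_integrable_phi_dominated_product:
  fixes f g :: "real \<Rightarrow> real"
  assumes p: "p > 0" and cont: "continuous_on {0..} f" "continuous_on {0..} g"
    and bound: "\<And>x. x \<ge> 0 \<Longrightarrow> \<bar>f x\<bar> \<le> (1 + x) * phi p x"
               "\<And>x. x \<ge> 0 \<Longrightarrow> \<bar>g x\<bar> \<le> (1 + x) * phi p x"
  shows "set_integrable lborel {0..} (\<lambda>x. f x * g x)"
proof (rule set_integrable_Ici_dominated[OF _ set_integrable_weighted_phi_sq[OF p]])
  show "continuous_on {0..} (\<lambda>x. f x * g x)"
    using cont by (intro continuous_intros)
  fix x :: real assume "x \<ge> 0"
  then have "\<bar>f x\<bar> * \<bar>g x\<bar> \<le> ((1 + x) * phi p x) * ((1 + x) * phi p x)"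
    using bound phi_pos[of p x] by (intro mult_mono) auto
  then show "\<bar>f x * g x\<bar> \<le> (1 + x)\<^sup>2 * (phi p x)\<^sup>2"
    by (simp add: abs_mult power2_eq_square mult_ac)
qed

lemma abs_phi_le: "x \<ge> 0 \<Longrightarrow> \<bar>phi p x\<bar> \<le> (1 + x) * phi p x"
  using phi_pos[of p x] by simp

lemma abs_dphi_le: "x \<ge> 0 \<Longrightarrow> \<bar>dphi p x\<bar> \<le> (1 + x) * phi p x"
  using abs_dphi_le_phi[of p x] abs_phi_le[of x p] phi_pos[of p x] by linarith

lemma abs_psi_le: "x \<ge> 0 \<Longrightarrow> \<bar>psi p x\<bar> \<le> (1 + x) * phi p x"
  using phi_pos[of p x] by (simp add: psi_def abs_mult field_simps)

lemma abs_dpsi_le: "x \<ge> 0 \<Longrightarrow> \<bar>dpsi p x\<bar> \<le> (1 + x) * phi p x"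
proof -
  assume x: "x \<ge> 0"
  have "\<bar>dpsi p x\<bar> \<le> phi p x / 2 + x * \<bar>dphi p x\<bar> / 2"
    using x phi_pos[of p x] abs_triangle_ineq4[of "- phi p x / 2" "x * dphi p x / 2"]
    by (simp add: dpsi_def abs_mult)
  also have "\<dots> \<le> (1 + x) * phi p x"
    using phi_pos[of p x] mult_left_mono[OF abs_dphi_le_phi[of p x] x]
      mult_nonneg_nonneg[OF x less_imp_le[OF phi_pos[of p x]]]
    by (simp add: algebra_simps)
  finally show ?thesis .
qed

lemma set_integrable_phi_phi: "p > 0 \<Longrightarrow> set_integrable lborel {0..} (\<lambda>x. phi p x * phi p x)"
  by (rule set_integrable_phi_dominated_product[OF _ continuous_on_phi continuous_on_phi abs_phi_le abs_phi_le])

lemma set_integrable_psi_phi: "p > 0 \<Longrightarrow> set_integrable lborel {0..} (\<lambda>x. psi p x * phi p x)"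
  by (rule set_integrable_phi_dominated_product[OF _ continuous_on_psi continuous_on_phi abs_psi_le abs_phi_le])

lemma set_integrable_dphi_psi: "p > 0 \<Longrightarrow> set_integrable lborel {0..} (\<lambda>x. dphi p x * psi p x)"
  by (rule set_integrable_phi_dominated_product[OF _ continuous_on_dphi continuous_on_psi abs_dphi_le abs_psi_le])

lemma set_integrable_psi_sq: "p > 0 \<Longrightarrow> set_integrable lborel {0..} (\<lambda>x. (psi p x)\<^sup>2)"
  unfolding power2_eq_square
  by (rule set_integrable_phi_dominated_product[OF _ continuous_on_psi continuous_on_psi abs_psi_le abs_psi_le])

lemma set_integrable_dpsi_sq: "p > 0 \<Longrightarrow> set_integrable lborel {0..} (\<lambda>x. (dpsi p x)\<^sup>2)"
  unfolding power2_eq_square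
  by (rule set_integrable_phi_dominated_product[OF _ continuous_on_dpsi continuous_on_dpsi abs_dpsi_le abs_dpsi_le])

section \<open>Solutions on the star graph\<close>

lemma H2_half_Lminus_has_derivative:
  fixes w w' w'' f :: "real \<Rightarrow> real"
  assumes p: "p > 0" and H2: "H2_half w w' w''"
    and eq: "AE x in lborel. x \<ge> 0 \<longrightarrow> - w'' x + w x - (p + 1) * phi p x powr (2 * p) * w x = f x"
    and f: "continuous_on {0..} f" and x: "x \<ge> 0"
  shows "(w' has_real_derivative potential p x * w x - f x) (at x within {0..})"
proof (rule has_real_derivative_integral_repr[OF _ _ _ x])
  show "\<forall>x\<ge>0. set_integrable lborel {0..x} w'' \<and> w' x = w' 0 + (LBINT t=0..x. w'' t)"
    using H2 unfolding H2_half_def by blast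
  show "AE x in lborel. x \<ge> 0 \<longrightarrow> w'' x = potential p x * w x - f x"
    using eq by eventually_elim (auto simp: potential_def algebra_simps)
  have "continuous_on {0..} w"
    using H2 unfolding H2_half_def by (intro DERIV_continuous_on) auto
  then show "continuous_on {0..} (\<lambda>x. potential p x * w x - f x)"
    by (intro continuous_intros f continuous_on_potential p)
qed

lemma Lminus_half_line_solution:
  fixes w w' w'' :: "real \<Rightarrow> real"
  assumes p: "p > 0" and H2: "H2_half w w' w''"
    and eq: "AE x in lborel. x \<ge> 0 \<longrightarrow>
               - w'' x + w x - (p + 1) * phi p x powr (2 * p) * w x = e * dphi p x"
    and x: "x \<ge> 0"
  shows "w x = w 0 * phi p x + e * psi p x"
proof -
  have w_L2: "set_integrable lborel {0..} (\<lambda>x. (w x)\<^sup>2)"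
    and w'_L2: "set_integrable lborel {0..} (\<lambda>x. (w' x)\<^sup>2)"
    and w_deriv: "\<And>x. x \<ge> 0 \<Longrightarrow> (w has_real_derivative w' x) (at x within {0..})"
    using H2 unfolding H2_half_def L2_half_def by blast+
  have w'_deriv: "(w' has_real_derivative potential p x * w x - e * dphi p x) (at x within {0..})"
    if "x \<ge> 0" for x
    by (rule H2_half_Lminus_has_derivative[OF p H2 eq _ that]) (intro continuous_intros continuous_on_dphi p)
  have w_cont: "continuous_on {0..} w" and w'_cont: "continuous_on {0..} w'"
    using w_deriv w'_deriv by (auto intro!: DERIV_continuous_on)
  define d where "d x = w x - psi p x * e" for x
  define d' where "d' x = w' x - dpsi p x * e" for x
  have d_deriv: "(d has_real_derivative d' x) (at x within {0..})" if "x \<ge> 0" for x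
    unfolding d_def[abs_def] d'_def
    using that by (intro DERIV_diff DERIV_cmult_right w_deriv has_real_derivative_psi p)
  have d'_deriv: "(d' has_real_derivative potential p x * d x) (at x within {0..})" if "x \<ge> 0" for x
  proof -
    have "(d' has_real_derivative potential p x * w x - e * dphi p x - (potential p x * psi p x - dphi p x) * e)
        (at x within {0..})"
      unfolding d'_def[abs_def]
      using that by (intro DERIV_diff DERIV_cmult_right w'_deriv has_real_derivative_dpsi p)
    then show ?thesis
      by (simp add: d_def algebra_simps)
  qed
  have "set_integrable lborel {0..} (\<lambda>x. (w x * 1 - psi p x * e)\<^sup>2)"
    by (rule set_integrable_square_bounded_combination[OF w_cont continuous_on_psi[OF p] _ _
          w_L2 set_integrable_psi_sq[OF p]]) auto
  then have d_L2: "set_integrable lborel {0..} (\<lambda>x. (d x)\<^sup>2)"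
    by (simp add: d_def)
  have "set_integrable lborel {0..} (\<lambda>x. (w' x * 1 - dpsi p x * e)\<^sup>2)"
    by (rule set_integrable_square_bounded_combination[OF w'_cont continuous_on_dpsi[OF p] _ _
          w'_L2 set_integrable_dpsi_sq[OF p]]) auto
  then have d'_L2: "set_integrable lborel {0..} (\<lambda>x. (d' x)\<^sup>2)"
    by (simp add: d'_def)
  have "set_integrable lborel {0..} (\<lambda>x. (d x * dphi p x - d' x * phi p x)\<^sup>2)"
  proof (rule set_integrable_square_bounded_combination[OF _ _ _ _ d_L2 d'_L2])
    show "continuous_on {0..} d" "continuous_on {0..} d'"
      using d_deriv d'_deriv by (auto intro!: DERIV_continuous_on)
    show "\<bar>dphi p x\<bar> \<le> 1" "\<bar>phi p x\<bar> \<le> 1" for x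
      using abs_dphi_le_phi[of p x] phi_le_1[OF p, of x] phi_pos[of p x] by auto
  qed (rule continuous_on_dphi[OF p] continuous_on_phi[OF p])+
  then have "d x * phi p 0 = d 0 * phi p x"
    using x d_deriv d'_deriv has_real_derivative_phi[OF p] has_real_derivative_dphi[OF p] phi_pos
    by (intro ode_solutions_proportional[where u' = "dphi p" and V = "potential p"]) auto
  then show ?thesis
    by (simp add: d_def phi_0 psi_0 algebra_simps)
qed

lemma U_eq: "p > 0 \<Longrightarrow> U p k i x = evec k i * dphi p x"
  by (simp add: U_def deriv_phi)

lemma ip_Gamma_separable:
  assumes "\<And>i x. i < N \<Longrightarrow> x \<ge> 0 \<Longrightarrow> F i x * G i x = a i * h x"
  shows "ip_Gamma N F G = (\<Sum>i<N. a i) * (LINT x:{0..}|lborel. h x)"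
proof -
  have "(LINT x:{0..}|lborel. F i x * G i x) = (LINT x:{0..}|lborel. a i * h x)" if "i < N" for i
    by (rule set_lebesgue_integral_cong) (use assms that in auto)
  then show ?thesis
    unfolding ip_Gamma_def by (simp add: sum_distrib_right)
qed

lemma sum_lessThan_step_profile:
  assumes "j < N"
  shows "(\<Sum>i<N. if i < j then 1 else if i = j then c else 0) = real j + (c :: real)"
proof -
  have "(\<Sum>i<N. if i < j then 1 else if i = j then c else 0)
      = (\<Sum>i<N. (if i < j then 1 else 0) + (if i = j then c else 0))"
    by (rule sum.cong) auto
  also have "\<dots> = card ({..<N} \<inter> {..<j}) + c"
    using assms by (simp add: sum.distrib sum.If_cases lessThan_def Collect_conj_eq[symmetric])
  also have "{..<N} \<inter> {..<j} = {..<j}"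
    using assms by auto
  finally show ?thesis
    by simp
qed

lemma sum_evec: "k < N \<Longrightarrow> (\<Sum>i<N. evec k i) = 0"
  using sum_lessThan_step_profile[of k N "- real k"] by (simp add: evec_def)

lemma inner_evec:
  assumes "j < N" "k < N"
  shows "(\<Sum>i<N. evec j i * evec k i) = (if j = k then real k + (real k)\<^sup>2 else 0)"
proof (cases j k rule: linorder_cases)
  case less
  then have "(\<Sum>i<N. evec j i * evec k i) = (\<Sum>i<N. if i < j then 1 else if i = j then - real j else 0)"
    by (intro sum.cong) (auto simp: evec_def)
  with less assms show ?thesis
    by (simp add: sum_lessThan_step_profile)
next
  case equal
  then have "(\<Sum>i<N. evec j i * evec k i) = (\<Sum>i<N. if i < k then 1 else if i = k then (real k)\<^sup>2 else 0)"
    by (intro sum.cong) (auto simp: evec_def power2_eq_square)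
  with equal assms show ?thesis
    by (simp add: sum_lessThan_step_profile)
next
  case greater
  then have "(\<Sum>i<N. evec j i * evec k i) = (\<Sum>i<N. if i < k then 1 else if i = k then - real k else 0)"
    by (intro sum.cong) (auto simp: evec_def)
  with greater assms show ?thesis
    by (simp add: sum_lessThan_step_profile)
qed

lemma ip_Gamma_Phi_of_phi_psi:
  assumes p: "p > 0" and k: "k < N"
    and W: "\<And>j y. j < N \<Longrightarrow> y \<ge> 0 \<Longrightarrow> W j y = c * phi p y + evec k j * psi p y"
  shows "ip_Gamma N W (Phi p) = real N * c * (LINT y:{0..}|lborel. phi p y * phi p y)"
proof -
  have "(LINT y:{0..}|lborel. W j y * Phi p j y)
      = c * (LINT y:{0..}|lborel. phi p y * phi p y) + evec k j * (LINT y:{0..}|lborel. psi p y * phi p y)"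
    if "j < N" for j
  proof -
    have "(LINT y:{0..}|lborel. W j y * Phi p j y)
        = (LINT y:{0..}|lborel. c * (phi p y * phi p y) + evec k j * (psi p y * phi p y))"
      using that by (intro set_lebesgue_integral_cong) (simp_all add: W Phi_def algebra_simps)
    then show ?thesis
      using set_integrable_phi_phi[OF p] set_integrable_psi_phi[OF p]
      by (simp add: set_integral_add set_integrable_mult_right)
  qed
  then show ?thesis
    using sum_evec[OF k] by (simp add: ip_Gamma_def sum.distrib sum_distrib_right[symmetric])
qed

lemma Lminus_solves_U_eq:
  assumes p: "p > 0" and k: "k < N"
    and orth: "ip_Gamma N W (Phi p) = 0"
    and sol: "Lminus_solves p N W (U p k)"
    and i: "i < N" and x: "x \<ge> 0"
  shows "W i x = evec k i * psi p x"
proof -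
  obtain D1 D2 where H2: "\<forall>j<N. H2_half (W j) (D1 j) (D2 j)"
    and vertex: "\<forall>j<N. W j 0 = W 0 0"
    and eq: "\<forall>j<N. AE x in lborel. x \<ge> 0 \<longrightarrow>
               - D2 j x + W j x - (p + 1) * phi p x powr (2 * p) * W j x = U p k j x"
    using sol unfolding Lminus_solves_def by blast
  have W_eq: "W j y = W 0 0 * phi p y + evec k j * psi p y" if j: "j < N" and y: "y \<ge> 0" for j y
  proof -
    have "AE x in lborel. x \<ge> 0 \<longrightarrow>
        - D2 j x + W j x - (p + 1) * phi p x powr (2 * p) * W j x = evec k j * dphi p x"
      using eq j unfolding U_eq[OF p] by blast
    then have "W j y = W j 0 * phi p y + evec k j * psi p y"
      using H2 j y by (blast intro: Lminus_half_line_solution[OF p])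
    then show ?thesis
      using vertex j by metis
  qed
  have "real N * W 0 0 * (LINT y:{0..}|lborel. phi p y * phi p y) = 0"
    using orth ip_Gamma_Phi_of_phi_psi[OF p k W_eq] by simp
  moreover have "(LINT y:{0..}|lborel. phi p y * phi p y) > 0"
    using set_integrable_phi_phi[OF p] by (rule set_integral_Ici_pos) (simp_all add: phi_pos)
  ultimately have "W 0 0 = 0"
    using k by simp
  then show ?thesis
    using W_eq[OF i x] by simp
qed

theorem lemma5p3:
  fixes N :: nat and p :: real and W :: "nat \<Rightarrow> nat \<Rightarrow> real \<Rightarrow> real"
  assumes "N \<ge> 3" and "p > 0"
    and W_L2c: "\<And>k. k \<in> {1..N-1} \<Longrightarrow> in_L2_Gamma N (W k) \<and> ip_Gamma N (W k) (Phi p) = 0"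
    and W_sol: "\<And>k. k \<in> {1..N-1} \<Longrightarrow> Lminus_solves p N (W k) (U p k)"
  shows "(\<forall>j\<in>{1..N-1}. \<forall>k\<in>{1..N-1}. j \<noteq> k \<longrightarrow> ip_Gamma N (U p j) (W k) = 0)
       \<and> (\<forall>j\<in>{1..N-1}. ip_Gamma N (U p j) (W j) > 0)
       \<and> (\<forall>j\<in>{1..N-1}. \<forall>k\<in>{1..N-1}. j \<noteq> k \<longrightarrow> ip_Gamma N (U p j) (U p k) = 0)
       \<and> (\<forall>j\<in>{1..N-1}. \<forall>k\<in>{1..N-1}. j \<noteq> k \<longrightarrow> ip_Gamma N (W j) (W k) = 0)"
proof -
  have p: "p > 0" and range: "\<And>k. k \<in> {1..N-1} \<Longrightarrow> k < N \<and> k \<ge> 1"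
    using assms(1,2) by auto
  have W_eq: "W k i x = evec k i * psi p x" if "k \<in> {1..N-1}" "i < N" "x \<ge> 0" for k i x
    using Lminus_solves_U_eq[OF p _ _ W_sol] W_L2c range that by blast
  have UW: "ip_Gamma N (U p j) (W k) = (\<Sum>i<N. evec j i * evec k i) * (LINT x:{0..}|lborel. dphi p x * psi p x)"
    if "k \<in> {1..N-1}" for j k
    by (rule ip_Gamma_separable) (simp add: U_eq[OF p] W_eq[OF that])
  have UU: "ip_Gamma N (U p j) (U p k) = (\<Sum>i<N. evec j i * evec k i) * (LINT x:{0..}|lborel. dphi p x * dphi p x)"
    for j k
    by (rule ip_Gamma_separable) (simp add: U_eq[OF p])
  have WW: "ip_Gamma N (W j) (W k) = (\<Sum>i<N. evec j i * evec k i) * (LINT x:{0..}|lborel. psi p x * psi p x)"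
    if "j \<in> {1..N-1}" "k \<in> {1..N-1}" for j k
    by (rule ip_Gamma_separable) (simp add: W_eq[OF that(1)] W_eq[OF that(2)])
  have "(LINT x:{0..}|lborel. dphi p x * psi p x) > 0"
    using set_integrable_dphi_psi[OF p]
    by (rule set_integral_Ici_pos) (auto intro: dphi_times_psi_pos[OF p] less_imp_le simp: le_less psi_0)
  with range show ?thesis
    by (auto simp: UW UU WW inner_evec add_pos_nonneg)
qed

end
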